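(* Let $D$, $\Omega<0$, $\mu$ and $\varphi$ be as in the context. Then there exists $\lambda^\star>0$ such that for every $\lambda\ge\lambda^\star$, $\varphi_\lambda(x)>0$ for all $x\in H_\lambda$. Moreover, for every $\lambda_0>0$ there exists $R(\lambda_0)>0$ such that for every $\lambda\ge\lambda_0$ and every $x\in H_\lambda$ with $|x|\ge R(\lambda_0)$ one has $\varphi_\lambda(x)>0$.
   Context: Setting: $D\subset\mathbb{R}^2$ is a bounded simply connected domain with $C^1$ boundary and barycenter at the origin, belonging to the class $\Sigma_{\arccos\frac1{\sqrt5}}$ (for $x_0\in\partial D$ with outward unit normal $\vec\nu(x_0)$: (1) $x_0\cdot\vec\nu(x_0)\ge0$; (2) no point $x\in D$ satisfies $\frac{x-x_0}{|x-x_0|}\cdot\vec\nu(x_0)\ge\frac1{\sqrt5}$; (3) the reflection across the tangent line at $x_0$ of $\{x\in D:(x-x_0)\cdot\vec\nu(x_0)\ge0\}$ is contained in $D$). $\chi_D$ is a V-state with angular velocity $\Omega<0$: $\psi(x)-\frac12\Omega|x|^2=\mu$ on $\partial D$, where $\psi(x)=\frac1{2\pi}\int_D\log|x-y|\,dy$. Set $\varphi(x)=\mu+\frac12\Omega|x|^2-\psi(x)$; it satisfies $\varphi(x)=\mu+\frac12\Omega|x|^2-\frac1{2\pi}\int_{\mathbb{R}^2}\log|x-y|\,H(\varphi(y))\,dy$ for all $x$, with $H=\chi_{[0,\infty)}$. Notation: for $\lambda>0$, $H_\lambda=\{(x_1,x_2)\in\mathbb{R}^2:x_1<\lambda\}$,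 $T_\lambda=\{(\lambda,x_2):x_2\in\mathbb{R}\}$, $x_\lambda=(2\lambda-x_1,x_2)$ for $x=(x_1,x_2)$, and $\varphi_\lambda(x)=\varphi(x)-\varphi(x_\lambda)$. *)

theory Defs
  imports "HOL-Analysis.Analysis"
begin

type_synonym pt = "real ^ 2"

definition C1_boundary_chart :: "pt set \<Rightarrow> pt \<Rightarrow> real \<Rightarrow> (pt \<Rightarrow> real) \<Rightarrow> (pt \<Rightarrow> pt) \<Rightarrow> bool" where
  "C1_boundary_chart D x0 r rho g \<longleftrightarrow>
     r > 0 \<and>
     (\<forall>x\<in>ball x0 r. (rho has_derivative (\<lambda>h. g x \<bullet> h)) (at x) \<and> g x \<noteq> 0) \<and>
     continuous_on (ball x0 r) g \<and>
     D \<inter> ball x0 r = {x \<in> ball x0 r. rho x < 0}"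

definition C1_boundary :: "pt set \<Rightarrow> bool" where
  "C1_boundary D \<longleftrightarrow> (\<forall>x0\<in>frontier D. \<exists>r rho g. C1_boundary_chart D x0 r rho g)"

definition outward_unit_normal :: "pt set \<Rightarrow> pt \<Rightarrow> pt \<Rightarrow> bool" where
  "outward_unit_normal D x0 n \<longleftrightarrow> x0 \<in> frontier D \<and>
     (\<exists>r rho g. C1_boundary_chart D x0 r rho g \<and> n = (1 / norm (g x0)) *\<^sub>R g x0)"

definition tangent_reflect :: "pt \<Rightarrow> pt \<Rightarrow> pt \<Rightarrow> pt" where
  "tangent_reflect x0 n x = x - (2 * ((x - x0) \<bullet> n)) *\<^sub>R n"

text \<open>The class Sigma_theta with cos theta = c (here c = 1/sqrt 5), w.r.t. the normal field nu.\<close>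
definition in_Sigma :: "real \<Rightarrow> pt set \<Rightarrow> (pt \<Rightarrow> pt) \<Rightarrow> bool" where
  "in_Sigma c D nu \<longleftrightarrow> (\<forall>x0\<in>frontier D.
      x0 \<bullet> nu x0 \<ge> 0 \<and>
      \<not> (\<exists>x\<in>D. ((1 / norm (x - x0)) *\<^sub>R (x - x0)) \<bullet> nu x0 \<ge> c) \<and>
      tangent_reflect x0 (nu x0) ` {x \<in> D. (x - x0) \<bullet> nu x0 \<ge> 0} \<subseteq> D)"

definition psi :: "pt set \<Rightarrow> pt \<Rightarrow> real" where
  "psi D x = (1 / (2 * pi)) * (LINT y:D|lborel. ln (norm (x - y)))"

definition phi :: "pt set \<Rightarrow> real \<Rightarrow> real \<Rightarrow> pt \<Rightarrow> real" where
  "phi D \<Omega> \<mu> x = \<mu> + (1/2) * \<Omega> * (norm x)^2 - psi D x"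

definition refl_pt :: "real \<Rightarrow> pt \<Rightarrow> pt" where
  "refl_pt lam x = (\<chi> i. if i = 1 then 2 * lam - x $ 1 else x $ i)"

definition phi_lam :: "pt set \<Rightarrow> real \<Rightarrow> real \<Rightarrow> real \<Rightarrow> pt \<Rightarrow> real" where
  "phi_lam D \<Omega> \<mu> lam x = phi D \<Omega> \<mu> x - phi D \<Omega> \<mu> (refl_pt lam x)"

definition H_half :: "real \<Rightarrow> pt set" where
  "H_half lam = {x. x $ 1 < lam}"

end

theory Submission imports Defs begin

text \<open>Writing \<open>x\<^sub>\<lambda>\<close> for the reflection of \<open>x\<close> in the line \<open>x\<^sub>1 = \<lambda>\<close>, one has
  \<open>|x\<^sub>\<lambda> - y|\<^sup>2 - |x - y|\<^sup>2 = 4(\<lambda> - x\<^sub>1)(\<lambda> - y\<^sub>1)\<close>, hence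
  \<open>\<phi>\<^sub>\<lambda>(x) = -2\<Omega>\<lambda>(\<lambda> - x\<^sub>1) - (\<psi>(x) - \<psi>(x\<^sub>\<lambda>))\<close>, whose first term is positive on \<open>H\<^sub>\<lambda>\<close>.
  Let \<open>D\<close> lie in the disc of radius \<open>\<rho>\<close>. If \<open>\<lambda> \<ge> \<rho> + 1\<close>, then \<open>x\<^sub>\<lambda>\<close> is farther than \<open>x\<close>
  from every point of \<open>D\<close>, so \<open>\<psi>(x) \<le> \<psi>(x\<^sub>\<lambda>)\<close>. If \<open>|x|\<close> is large, the bound
  \<open>ln (a/b) \<le> (a\<^sup>2 - b\<^sup>2)/(2b\<^sup>2)\<close> gives \<open>\<psi>(x) - \<psi>(x\<^sub>\<lambda>) \<le> (\<lambda> - x\<^sub>1) |D| \<rho> / (\<pi> d\<^sup>2)\<close>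
  with \<open>d = |x| - \<rho>\<close>, which is eventually below \<open>-2\<Omega>\<lambda>\<^sub>0(\<lambda> - x\<^sub>1)\<close>.\<close>

lemma norm_sq_vec2: "(norm (v::real^2))\<^sup>2 = (v$1)\<^sup>2 + (v$2)\<^sup>2"
  unfolding power2_norm_eq_inner by (simp add: inner_vec_def sum_2 power2_eq_square)

lemma refl_pt_nth [simp]: "refl_pt l x $ 1 = 2*l - x$1" "refl_pt l x $ 2 = x$2"
  by (auto simp: refl_pt_def)

lemma norm_refl_pt_diff_sq:
  "(norm (refl_pt l x - y))\<^sup>2 - (norm (x - y))\<^sup>2 = 4*(l - x$1)*(l - y$1)"
  unfolding norm_sq_vec2 by (simp add: algebra_simps power2_eq_square)

lemma norm_le_norm_refl_pt:
  assumes "x$1 \<le> l" "y$1 \<le> l"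
  shows "norm (x - y) \<le> norm (refl_pt l x - y)"
proof (rule power2_le_imp_le)
  have "0 \<le> 4*(l - x$1)*(l - y$1)"
    using assms by simp
  then show "(norm (x - y))\<^sup>2 \<le> (norm (refl_pt l x - y))\<^sup>2"
    using norm_refl_pt_diff_sq[of l x y] by linarith
qed simp

lemma phi_lam_eq_psi_diff:
  "phi_lam D \<Omega> \<mu> l x = -2*\<Omega>*l*(l - x$1) - (psi D x - psi D (refl_pt l x))"
proof -
  have refl: "(norm (refl_pt l x))\<^sup>2 = (norm x)\<^sup>2 + 4*l*(l - x$1)"
    using norm_refl_pt_diff_sq[of l x 0] by (simp add: algebra_simps)
  show ?thesis
    unfolding phi_lam_def phi_def refl by (simp add: algebra_simps)
qed

lemma ln_minus_ln_le_sq_ratio: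
  fixes a b :: real
  assumes "0 < a" "0 < b"
  shows "ln a - ln b \<le> (a\<^sup>2 - b\<^sup>2) / (2 * b\<^sup>2)"
proof -
  have "2*(ln a - ln b) = ln (a\<^sup>2/b\<^sup>2)"
    using assms by (simp add: ln_div ln_mult power2_eq_square)
  also have "\<dots> \<le> a\<^sup>2/b\<^sup>2 - 1"
    using assms by (intro ln_le_minus_one) simp
  also have "\<dots> = (a\<^sup>2 - b\<^sup>2) / b\<^sup>2"
    using assms by (simp add: field_simps)
  finally show ?thesis
    by (simp add: field_simps)
qed

lemma ln_norm_diff_refl_pt_le:
  assumes "x$1 \<le> l" "y$1 - l \<le> \<rho>" "0 \<le> \<rho>" "0 < d"
    and "d \<le> norm (x - y)" "d \<le> norm (refl_pt l x - y)"
  shows "ln (norm (x - y)) - ln (norm (refl_pt l x - y)) \<le> 2*(l - x$1)*\<rho>/d\<^sup>2"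
proof -
  have sq: "(norm (x - y))\<^sup>2 - (norm (refl_pt l x - y))\<^sup>2 = 4*(l - x$1)*(y$1 - l)"
    using norm_refl_pt_diff_sq[of l x y] by (simp add: algebra_simps)
  have "0 < norm (x - y)" "0 < norm (refl_pt l x - y)"
    using assms(4-6) by linarith+
  from ln_minus_ln_le_sq_ratio[OF this]
  have "ln (norm (x - y)) - ln (norm (refl_pt l x - y))
      \<le> 4*(l - x$1)*(y$1 - l) / (2 * (norm (refl_pt l x - y))\<^sup>2)"
    unfolding sq .
  also have "\<dots> = 2*(l - x$1)*(y$1 - l) / (norm (refl_pt l x - y))\<^sup>2"
    by (simp add: field_split_simps)
  also have "\<dots> \<le> 2*(l - x$1)*\<rho> / (norm (refl_pt l x - y))\<^sup>2"
    using mult_left_mono[of "y$1 - l" \<rho> "2*(l - x$1)"] assms(1,2)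
    by (simp add: divide_right_mono)
  also have "\<dots> \<le> 2*(l - x$1)*\<rho>/d\<^sup>2"
  proof (rule divide_left_mono)
    show "d\<^sup>2 \<le> (norm (refl_pt l x - y))\<^sup>2"
      using assms(4,6) by (simp add: power_mono)
  qed (use assms in \<open>auto intro!: mult_pos_pos\<close>)
  finally show ?thesis .
qed

lemma set_integrable_ln_dist:
  fixes D :: "'a::euclidean_space set"
  assumes "bounded D" "open D" "z \<notin> closure D"
  shows "set_integrable lborel D (\<lambda>y. ln (norm (z - y)))"
proof -
  have "continuous_on (closure D) (\<lambda>y. ln (norm (z - y)))"
    using assms(3) by (intro continuous_intros) auto
  then have "set_integrable lborel (closure D) (\<lambda>y. ln (norm (z - y)))"
    unfolding set_integrable_def using assms(1)
    by (intro borel_integrable_compact) (auto simp: compact_closure)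
  then show ?thesis
    by (rule set_integrable_subset) (use assms(2) closure_subset in auto)
qed

text \<open>No integrability of \<open>f\<close> is needed: if it fails, the integral of \<open>f\<close> is \<open>0\<close>.\<close>

lemma set_integral_le_nonneg_integrable:
  fixes f g :: "'a::euclidean_space \<Rightarrow> real"
  assumes "set_integrable lborel D g" "\<And>y. y \<in> D \<Longrightarrow> f y \<le> g y" "\<And>y. y \<in> D \<Longrightarrow> 0 \<le> g y"
  shows "(LINT y:D|lborel. f y) \<le> (LINT y:D|lborel. g y)"
proof (cases "set_integrable lborel D f")
  case True
  then show ?thesis by (rule set_integral_mono) (use assms in auto)
next
  case False
  then have "(LINT y:D|lborel. f y) = 0"
    unfolding set_integrable_def set_lebesgue_integral_def by (rule not_integrable_integral_eq)
  moreover have "(LINT y:D|lborel. (0::real)) \<le> (LINT y:D|lborel. g y)"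
    using assms by (intro set_integral_mono) (auto simp: set_integrable_def)
  ultimately show ?thesis by (simp add: set_lebesgue_integral_def)
qed

lemma psi_le_psi_of_farther:
  assumes "bounded D" "open D"
    and "\<And>y. y \<in> closure D \<Longrightarrow> norm (x - y) \<le> norm (z - y)"
    and "\<And>y. y \<in> closure D \<Longrightarrow> 1 \<le> norm (z - y)"
  shows "psi D x \<le> psi D z"
proof -
  have "z \<notin> closure D"
    using assms(4) by force
  then have "set_integrable lborel D (\<lambda>y. ln (norm (z - y)))"
    using assms(1,2) by (rule set_integrable_ln_dist[rotated 2])
  then have "(LINT y:D|lborel. ln (norm (x - y))) \<le> (LINT y:D|lborel. ln (norm (z - y)))"
  proof (rule set_integral_le_nonneg_integrable)
    fix y assume "y \<in> D"
    then have y: "y \<in> closure D"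
      using closure_subset by blast
    show "0 \<le> ln (norm (z - y))"
      using assms(4)[OF y] by simp
    show "ln (norm (x - y)) \<le> ln (norm (z - y))"
    proof (cases "x = y")
      case False
      then show ?thesis
        using assms(3,4)[OF y] by (subst ln_le_cancel_iff) auto
    qed (use assms(4)[OF y] in simp)
  qed
  then show ?thesis
    unfolding psi_def by (simp add: divide_right_mono)
qed

lemma psi_diff_le_measure:
  assumes "bounded D" "open D" "0 < d"
    and "\<And>y. y \<in> closure D \<Longrightarrow> d \<le> norm (x - y)"
    and "\<And>y. y \<in> closure D \<Longrightarrow> d \<le> norm (z - y)"
    and "\<And>y. y \<in> D \<Longrightarrow> ln (norm (x - y)) - ln (norm (z - y)) \<le> c"
  shows "psi D x - psi D z \<le> measure lborel D * c / (2 * pi)"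
proof -
  have x: "set_integrable lborel D (\<lambda>y. ln (norm (x - y)))"
    using assms(1-4) by (intro set_integrable_ln_dist) force+
  have z: "set_integrable lborel D (\<lambda>y. ln (norm (z - y)))"
    using assms(1-3,5) by (intro set_integrable_ln_dist) force+
  have D: "D \<in> sets lborel" "emeasure lborel D \<noteq> \<infinity>"
    using borel_open[OF assms(2)] emeasure_bounded_finite[OF assms(1)] by auto
  then have "set_integrable lborel D (\<lambda>y. c)"
    unfolding set_integrable_def
    by (simp add: integrable_indicator_iff integrable_mult_left_iff less_top)
  then have "(LINT y:D|lborel. ln (norm (x - y)) - ln (norm (z - y))) \<le> (LINT y:D|lborel. c)"
    using x z assms(6) by (intro set_integral_mono) auto
  also have "\<dots> = measure lborel D * c"
    using D by (simp add: set_integral_const)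
  finally have "(LINT y:D|lborel. ln (norm (x - y))) - (LINT y:D|lborel. ln (norm (z - y)))
      \<le> measure lborel D * c"
    using set_integral_diff(2)[OF x z] by simp
  moreover have "psi D x - psi D z
      = ((LINT y:D|lborel. ln (norm (x - y))) - (LINT y:D|lborel. ln (norm (z - y)))) / (2 * pi)"
    unfolding psi_def by (simp add: field_simps)
  ultimately show ?thesis
    by (simp add: divide_right_mono)
qed

lemma phi_lam_pos_beyond_radius:
  assumes "bounded D" "open D" "\<Omega> < 0" "closure D \<subseteq> cball 0 \<rho>" "0 \<le> \<rho>" "\<rho> + 1 \<le> l"
    and "x \<in> H_half l"
  shows "phi_lam D \<Omega> \<mu> l x > 0"
proof -
  have x1: "x$1 < l"
    using assms(7) by (simp add: H_half_def)
  have y1: "y$1 \<le> \<rho>" if "y \<in> closure D" for y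
    using assms(4) that component_le_norm_cart[of y 1] by force
  have far: "1 \<le> norm (refl_pt l x - y)" if "y \<in> closure D" for y
    using y1[OF that] assms(6) x1 component_le_norm_cart[of "refl_pt l x - y" 1] by simp
  have "psi D x \<le> psi D (refl_pt l x)"
    using assms(6) x1 y1 far
    by (intro psi_le_psi_of_farther assms(1,2) norm_le_norm_refl_pt) force+
  moreover have "0 < -2*\<Omega>*l*(l - x$1)"
    using assms(3,5,6) x1 by (simp add: mult_pos_pos mult_neg_pos)
  ultimately show ?thesis
    unfolding phi_lam_eq_psi_diff by linarith
qed

lemma phi_lam_pos_far_from_origin:
  assumes "bounded D" "open D" "\<Omega> < 0" "closure D \<subseteq> cball 0 \<rho>" "0 \<le> \<rho>" "0 < l0" "l0 \<le> l"
    and "x \<in> H_half l"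
    and "\<rho> + 1 + measure lborel D * \<rho> / (pi * (-2*\<Omega>*l0)) \<le> norm x"
  shows "phi_lam D \<Omega> \<mu> l x > 0"
proof -
  define K where "K = -2*\<Omega>*l0"
  define q where "q = measure lborel D * \<rho> / pi"
  define d where "d = norm x - \<rho>"
  have K: "0 < K" and q: "0 \<le> q"
    using assms(3,5,6) by (auto simp: K_def q_def mult_neg_pos)
  have x1: "x$1 < l"
    using assms(8) by (simp add: H_half_def)
  have d: "1 + q/K \<le> d"
    using assms(9) by (simp add: d_def K_def q_def field_simps)
  moreover have "0 \<le> q/K"
    using q K by simp
  ultimately have d1: "1 \<le> d"
    by linarith
  have bound: "norm y \<le> \<rho>" "y$1 - l \<le> \<rho>" if "y \<in> closure D" for y
    using assms(4,6,7) that component_le_norm_cart[of y 1] by force+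
  have "norm x \<le> norm (refl_pt l x)"
    using norm_le_norm_refl_pt[of x l 0] x1 assms(6,7) by simp
  then have dist_x: "d \<le> norm (x - y)" and dist_refl: "d \<le> norm (refl_pt l x - y)"
    if "y \<in> closure D" for y
    using bound(1)[OF that] norm_triangle_ineq2[of x y] norm_triangle_ineq2[of "refl_pt l x" y]
    by (auto simp: d_def)
  have "psi D x - psi D (refl_pt l x) \<le> measure lborel D * (2*(l - x$1)*\<rho>/d\<^sup>2) / (2*pi)"
  proof (rule psi_diff_le_measure[OF assms(1,2) _ dist_x dist_refl])
    fix y assume "y \<in> D"
    then have y: "y \<in> closure D"
      using closure_subset by blast
    show "ln (norm (x - y)) - ln (norm (refl_pt l x - y)) \<le> 2*(l - x$1)*\<rho>/d\<^sup>2"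
      by (rule ln_norm_diff_refl_pt_le[OF less_imp_le[OF x1] bound(2)[OF y] assms(5) _ dist_x[OF y]
            dist_refl[OF y]])
        (use d1 in linarith)
  qed (use d1 in linarith)
  also have "\<dots> = (l - x$1) * (q / d\<^sup>2)"
    unfolding q_def using d1 by (simp add: field_simps)
  also have "\<dots> < (l - x$1) * K"
  proof (rule mult_strict_left_mono)
    have "q < K * d"
      using d K by (simp add: field_simps)
    also have "\<dots> \<le> K * d\<^sup>2"
      using d1 K by (simp add: power2_eq_square)
    finally show "q / d\<^sup>2 < K"
      using d1 by (simp add: divide_less_eq)
  qed (use x1 in simp)
  also have "\<dots> \<le> -2*\<Omega>*l*(l - x$1)"
    using x1 assms(3,7) by (simp add: K_def mult_right_mono)
  finally show ?thesis
    unfolding phi_lam_eq_psi_diff by linarith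
qed

theorem proposition3:
  fixes D :: "(real ^ 2) set" and nu :: "real ^ 2 \<Rightarrow> real ^ 2" and \<Omega> \<mu> :: real
  assumes "open D" and "connected D" and "bounded D" and "simply_connected D"
    and "C1_boundary D"
    and "\<forall>x0\<in>frontier D. outward_unit_normal D x0 (nu x0)"
    and "integral D (\<lambda>y. y) = 0"
    and "in_Sigma (1 / sqrt 5) D nu"
    and "\<Omega> < 0"
    and "\<forall>x\<in>frontier D. psi D x - (1/2) * \<Omega> * (norm x)^2 = \<mu>"
  shows "(\<exists>ls>0. \<forall>l\<ge>ls. \<forall>x\<in>H_half l. phi_lam D \<Omega> \<mu> l x > 0) \<and>
         (\<forall>l0>0. \<exists>R>0. \<forall>l\<ge>l0. \<forall>x\<in>H_half l. norm x \<ge> R \<longrightarrow> phi_lam D \<Omega> \<mu> l x > 0)"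
proof -
  obtain \<rho> where \<rho>: "closure D \<subseteq> cball 0 \<rho>" "0 \<le> \<rho>"
    using bounded_subset_ballD[OF bounded_closure[OF assms(3)], of 0]
    by (meson ball_subset_cball less_imp_le order_trans)
  have "\<forall>l\<ge>\<rho> + 1. \<forall>x\<in>H_half l. phi_lam D \<Omega> \<mu> l x > 0"
    using phi_lam_pos_beyond_radius[OF assms(3,1,9) \<rho>] by blast
  moreover have "\<exists>R>0. \<forall>l\<ge>l0. \<forall>x\<in>H_half l. norm x \<ge> R \<longrightarrow> phi_lam D \<Omega> \<mu> l x > 0"
    if "0 < l0" for l0
  proof -
    define R where "R = \<rho> + 1 + measure lborel D * \<rho> / (pi * (-2*\<Omega>*l0))"
    have "0 < pi * (-2*\<Omega>*l0)"
      using that assms(9) by (simp add: mult_neg_pos mult_pos_neg)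
    then have "0 \<le> measure lborel D * \<rho> / (pi * (-2*\<Omega>*l0))"
      by (rule divide_nonneg_pos[OF mult_nonneg_nonneg[OF measure_nonneg \<rho>(2)]])
    then have "0 < R"
      using \<rho>(2) unfolding R_def by linarith
    then show ?thesis
      using phi_lam_pos_far_from_origin[OF assms(3,1,9) \<rho> that] unfolding R_def by blast
  qed
  ultimately show ?thesis
    using \<rho>(2) by (intro conjI exI[of _ "\<rho> + 1"]) auto
qed

end
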